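(* Let $p$ be a prime, $a$ a positive integer and $N=p^a$. For $j\in\{0,1,\dots,N-1\}$ let $x_j=(x_{0,j},x_{1,j},\dots,x_{N-1,j})\in\mathbb{Z}_p^{N}$ where $x_{i,j}=\binom{i}{j}\bmod p$. Then for every $j$ and every cyclic shift $x'_j$ of $x_j$ (i.e. $x'_j=(x_{k,j},x_{k+1,j},\dots,x_{k-1,j})$ for some $k$, indices mod $N$), the difference $x_j-x'_j$ is a $\mathbb{Z}_p$-linear combination of $x_0,x_1,\dots,x_{j-1}$ (for $j=0$ this means $x_0-x'_0=0$). *)

theory Defs
  imports "HOL-Number_Theory.Number_Theory"
begin

text \<open>The vector x_j in (Z/pZ)^N, represented by its coordinates as integers in
  {0..p-1}: coordinate i (for 0 \<le> i < N) is (i choose j) mod p.\<close>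
definition binom_vec :: "nat \<Rightarrow> nat \<Rightarrow> nat \<Rightarrow> int" where
  "binom_vec p j i = int ((i choose j) mod p)"

definition cyc_shift :: "nat \<Rightarrow> nat \<Rightarrow> (nat \<Rightarrow> int) \<Rightarrow> nat \<Rightarrow> int" where
  "cyc_shift N k x i = x ((i + k) mod N)"

end

theory Submission
  imports Defs
begin

text \<open>Since 0 < t < p^a, the binomial coefficient p^a choose t is divisible by p: otherwise
  it is coprime to p^a, and t * (p^a choose t) = p^a * (p^a - 1 choose t - 1) forces
  p^a to divide t. Adding p^a to the top of a binomial coefficient with bottom below p^a
  therefore does not change it mod p (Vandermonde), so m \<mapsto> m choose j is p^a-periodic
  mod p. Hence the cyclic shift of x_j is the vector of (i + k choose j) mod p, and
  Vandermonde once more writes i + k choose j as i choose j plus a combination of the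
  i choose l with l < j, the coefficients k choose (j - l) not depending on i.\<close>

lemma prime_dvd_prime_power_choose:
  fixes p a t :: nat
  assumes "prime p" "0 < t" "t < p ^ a"
  shows "p dvd (p ^ a choose t)"
proof (rule ccontr)
  assume "\<not> p dvd (p ^ a choose t)"
  then have "coprime (p ^ a) (p ^ a choose t)"
    using assms(1) by (simp add: prime_imp_coprime)
  moreover have "t * (p ^ a choose t) = p ^ a * ((p ^ a - 1) choose (t - 1))"
    using times_binomial_minus1_eq[OF assms(2)] by simp
  then have "p ^ a dvd t * (p ^ a choose t)" by simp
  ultimately have "p ^ a dvd t"
    using coprime_dvd_mult_left_iff by blast
  with assms(2,3) show False
    by (simp add: nat_dvd_not_less)
qed

lemma vandermonde_lessThan:
  "(m + n) choose j = (m choose j) + (\<Sum>l<j. (m choose l) * (n choose (j - l)))"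
  using vandermonde[of m n j] by (simp add: lessThan_Suc_atMost[symmetric])

lemma choose_add_prime_power_cong:
  fixes p a j m :: nat
  assumes "prime p" "j < p ^ a"
  shows "[(m + p ^ a) choose j = m choose j] (mod p)"
proof -
  have "p dvd (\<Sum>l<j. (m choose l) * (p ^ a choose (j - l)))"
  proof (rule dvd_sum)
    fix l assume "l \<in> {..<j}"
    then have "0 < j - l" "j - l < p ^ a"
      using assms(2) by auto
    then show "p dvd (m choose l) * (p ^ a choose (j - l))"
      using prime_dvd_prime_power_choose[OF assms(1)] by simp
  qed
  then show ?thesis
    unfolding vandermonde_lessThan by (auto simp: cong_def elim!: dvdE)
qed

lemma cong_mod_period:
  fixes f :: "nat \<Rightarrow> nat"
  assumes "\<And>m. [f (m + N) = f m] (mod q)"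
  shows "[f m = f (m mod N)] (mod q)"
proof -
  have "[f (r + d * N) = f r] (mod q)" for r d
  proof (induction d)
    case (Suc d)
    have "[f (r + Suc d * N) = f (r + d * N)] (mod q)"
      using assms[of "r + d * N"] by (simp add: algebra_simps)
    then show ?case
      using Suc.IH cong_trans by blast
  qed simp
  from this[of "m mod N" "m div N"] show ?thesis
    by (simp add: mod_div_mult_eq cong_sym)
qed

lemma choose_cong_mod_prime_power:
  fixes p a j m :: nat
  assumes "prime p" "j < p ^ a"
  shows "[m choose j = (m mod p ^ a) choose j] (mod p)"
  using cong_mod_period[of "\<lambda>m. m choose j"] choose_add_prime_power_cong[OF assms] by blast

lemma binom_vec_cong: "[binom_vec p l n = int (n choose l)] (mod int p)"
  unfolding binom_vec_def by (simp add: cong_def zmod_int)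

lemma cyc_shift_binom_vec_cong:
  fixes p a j k i :: nat
  assumes "prime p" "j < p ^ a"
  shows "[cyc_shift (p ^ a) k (binom_vec p j) i = int ((i + k) choose j)] (mod int p)"
proof -
  have "[int (((i + k) mod p ^ a) choose j) = int ((i + k) choose j)] (mod int p)"
    using choose_cong_mod_prime_power[OF assms] by (simp add: cong_int_iff cong_sym)
  then show ?thesis
    unfolding cyc_shift_def using binom_vec_cong cong_trans by blast
qed

theorem claim4p2:
  fixes p a j k :: nat
  assumes "prime p" and "0 < a" and "j < p ^ a"
  shows "\<exists>c :: nat \<Rightarrow> int. \<forall>i < p ^ a.
           [binom_vec p j i - cyc_shift (p ^ a) k (binom_vec p j) i
              = (\<Sum>l<j. c l * binom_vec p l i)] (mod int p)"
proof (intro exI allI impI)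
  fix i
  have "[binom_vec p j i - cyc_shift (p ^ a) k (binom_vec p j) i
         = int (i choose j) - int ((i + k) choose j)] (mod int p)"
    using binom_vec_cong cyc_shift_binom_vec_cong[OF assms(1,3)] by (rule cong_diff)
  also have "int (i choose j) - int ((i + k) choose j)
             = (\<Sum>l<j. - int (k choose (j - l)) * int (i choose l))"
    unfolding vandermonde_lessThan by (simp add: sum_negf algebra_simps)
  also have "[\<dots> = (\<Sum>l<j. - int (k choose (j - l)) * binom_vec p l i)] (mod int p)"
    by (intro cong_sum cong_mult cong_refl cong_sym[OF binom_vec_cong])
  finally show "[binom_vec p j i - cyc_shift (p ^ a) k (binom_vec p j) i
      = (\<Sum>l<j. (\<lambda>l. - int (k choose (j - l))) l * binom_vec p l i)] (mod int p)"
    by simp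
qed

end
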